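(* Let $D>0$ be a square-free integer with $-D\equiv 2$ or $3\pmod 4$, and suppose $C(-4D)\cong(\mathbb{Z}/2\mathbb{Z})^n$ for some $n\ge 0$. Let $c=p_1^{n_1}\cdots p_k^{n_k}$ be an odd positive integer, with $p_i$ distinct primes. Then there exists a normalized solution $(a,b,c)$ to $x^2+Dy^2=z^2$ if and only if $\left(\frac{-D}{p_i}\right)=1$ for all $1\le i\le k$.
   Context: A normalized solution of $x^2+Dy^2=z^2$ is a triple $(a,b,c)$ of natural numbers with $a^2+Db^2=c^2$ and $\gcd(a,b,c)=1$. $C(-4D)$ denotes the set of $\mathrm{SL}_2(\mathbb{Z})$-equivalence classes of primitive positive-definite binary quadratic forms of discriminant $-4D$, a group under Dirichlet composition. $\left(\frac{\cdot}{p}\right)$ is the Legendre symbol. *)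

theory Defs
  imports "HOL-Algebra.Product_Groups" "HOL-Algebra.Elementary_Groups"
          "HOL-Number_Theory.Number_Theory" "HOL-Computational_Algebra.Squarefree"
begin

type_synonym bqf = "int \<times> int \<times> int"

definition bqf_eval :: "bqf \<Rightarrow> int \<Rightarrow> int \<Rightarrow> int" where
  "bqf_eval f x y = (case f of (a, b, c) \<Rightarrow> a * x^2 + b * x * y + c * y^2)"

definition bqf_disc :: "bqf \<Rightarrow> int" where
  "bqf_disc f = (case f of (a, b, c) \<Rightarrow> b^2 - 4 * a * c)"

definition bqf_primitive :: "bqf \<Rightarrow> bool" where
  "bqf_primitive f = (case f of (a, b, c) \<Rightarrow> gcd (gcd a b) c = 1)"

definition bqf_posdef :: "bqf \<Rightarrow> bool" where
  "bqf_posdef f = (\<forall>x y. (x, y) \<noteq> (0, 0) \<longrightarrow> bqf_eval f x y > 0)"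

definition ppd_forms :: "int \<Rightarrow> bqf set" where
  "ppd_forms Delta = {f. bqf_disc f = Delta \<and> bqf_primitive f \<and> bqf_posdef f}"

definition bqf_equiv :: "bqf \<Rightarrow> bqf \<Rightarrow> bool" where
  "bqf_equiv f g = (\<exists>p q r s. p * s - q * r = 1 \<and>
       (\<forall>x y. bqf_eval g x y = bqf_eval f (p * x + q * y) (r * x + s * y)))"

definition bqf_equiv_rel :: "int \<Rightarrow> (bqf \<times> bqf) set" where
  "bqf_equiv_rel Delta = {(f, g). f \<in> ppd_forms Delta \<and> g \<in> ppd_forms Delta \<and> bqf_equiv f g}"

definition form_classes :: "int \<Rightarrow> bqf set set" where
  "form_classes Delta = ppd_forms Delta // bqf_equiv_rel Delta"

definition dirichlet_composite :: "int \<Rightarrow> bqf \<Rightarrow> bqf \<Rightarrow> bqf \<Rightarrow> bool" where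
  "dirichlet_composite Delta f1 f2 h =
     (case f1 of (a1, b1, c1) \<Rightarrow> case f2 of (a2, b2, c2) \<Rightarrow>
        gcd (gcd a1 a2) ((b1 + b2) div 2) = 1 \<and>
        (\<exists>B. [B = b1] (mod 2 * a1) \<and> [B = b2] (mod 2 * a2) \<and> [B^2 = Delta] (mod 4 * a1 * a2) \<and>
             h = (a1 * a2, B, (B^2 - Delta) div (4 * a1 * a2))))"

definition principal_form :: "int \<Rightarrow> bqf" where
  "principal_form Delta = (if even Delta then (1, 0, - Delta div 4) else (1, 1, (1 - Delta) div 4))"

definition form_class_group :: "int \<Rightarrow> bqf set monoid" where
  "form_class_group Delta =
     \<lparr> carrier = form_classes Delta,
       monoid.mult = (\<lambda>X Y. THE Z. Z \<in> form_classes Delta \<and>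
          (\<exists>f1\<in>X. \<exists>f2\<in>Y. \<exists>h\<in>Z. dirichlet_composite Delta f1 f2 h)),
       one = bqf_equiv_rel Delta `` {principal_form Delta} \<rparr>"

definition elem_abelian_2 :: "nat \<Rightarrow> (nat \<Rightarrow> int) monoid" where
  "elem_abelian_2 n = product_group {..<n} (\<lambda>_. integer_mod_group 2)"

end

theory Submission
  imports Defs "HOL-Library.Product_Plus"
begin

text \<open>
  Forms of discriminant \<open>-4D\<close> correspond to lattices in \<open>\<int>[\<surd>-D]\<close>: the form \<open>(a, 2b, c)\<close>
  to the ideal \<open>[a, b + \<surd>-D]\<close>, on which the norm is \<open>a\<close> times the form. Equivalent forms give
  homothetic lattices and conversely (the orientation is forced by comparing indices), and a
  Dirichlet composite corresponds to the product of ideals; hence composition is well defined on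
  classes. If every prime \<open>p\<close> dividing the odd number \<open>c\<close> has \<open>(-D/p) = 1\<close>, Hensel lifting and
  the Chinese remainder theorem give \<open>x\<close> with \<open>x\<^sup>2 \<equiv> -D (mod c\<^sup>2)\<close>, and the form
  \<open>(c, 2x, (x\<^sup>2 + D)/c)\<close> composes with itself to \<open>(c\<^sup>2, 2x, (x\<^sup>2 + D)/c\<^sup>2)\<close>. Since every class
  squares to the principal class, the latter is equivalent to \<open>x\<^sup>2 + D y\<^sup>2\<close>, which therefore
  represents \<open>c\<^sup>2\<close> properly. Conversely, a primitive solution makes \<open>-D\<close> a square modulo each
  \<open>p\<close> dividing \<open>c\<close>, and squarefreeness rules out \<open>p\<close> dividing \<open>D\<close>.
\<close>

section \<open>Arithmetic of \<open>\<int>[\<surd>-D]\<close>\<close>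

text \<open>The pair \<open>(u, v)\<close> stands for \<open>u + v \<surd>-D\<close>.\<close>

definition qmult :: "int \<Rightarrow> int \<times> int \<Rightarrow> int \<times> int \<Rightarrow> int \<times> int" where
  "qmult D z w = (fst z * fst w - D * snd z * snd w, fst z * snd w + snd z * fst w)"

definition qnorm :: "int \<Rightarrow> int \<times> int \<Rightarrow> int" where
  "qnorm D z = fst z ^ 2 + D * snd z ^ 2"

definition det2 :: "int \<times> int \<Rightarrow> int \<times> int \<Rightarrow> int" where
  "det2 z w = fst z * snd w - snd z * fst w"

lemma qnorm_0 [simp]: "qnorm D 0 = 0"
  by (simp add: qnorm_def)

lemma qmult_interchange:
  "qmult D (qmult D a z) (qmult D b w) = qmult D (qmult D a b) (qmult D z w)"
  by (simp add: qmult_def algebra_simps)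

lemma qnorm_qmult: "qnorm D (qmult D z w) = qnorm D z * qnorm D w"
  by (simp add: qnorm_def qmult_def power2_eq_square algebra_simps)

lemma det2_qmult: "det2 (qmult D a z) (qmult D a w) = qnorm D a * det2 z w"
  by (simp add: qnorm_def det2_def qmult_def power2_eq_square algebra_simps)

lemma qnorm_pos:
  assumes "D > 0" and "z \<noteq> 0"
  shows "qnorm D z > 0"
proof (cases "snd z = 0")
  case True
  with assms(2) have "fst z \<noteq> 0" by (simp add: prod_eq_iff)
  with True show ?thesis by (simp add: qnorm_def)
next
  case False
  with assms(1) have "D * snd z ^ 2 > 0" by simp
  then show ?thesis by (simp add: qnorm_def add_nonneg_pos)
qed

lemma qmult_neq_0:
  assumes "D > 0" and "z \<noteq> 0" and "w \<noteq> 0"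
  shows "qmult D z w \<noteq> 0"
proof
  assume "qmult D z w = 0"
  then have "qnorm D z * qnorm D w = 0" using qnorm_qmult[of D z w] by simp
  with assms qnorm_pos show False by (metis mult_eq_0_iff less_irrefl)
qed

section \<open>Lattices\<close>

definition pair_scale :: "int \<Rightarrow> int \<times> int \<Rightarrow> int \<times> int" where
  "pair_scale k z = (k * fst z, k * snd z)"

interpretation int_pair: Modules.module pair_scale
  by unfold_locales (auto simp: pair_scale_def algebra_simps)

lemma module_hom_qmult: "Modules.module_hom pair_scale pair_scale (qmult D a)"
  by unfold_locales (auto simp: qmult_def pair_scale_def algebra_simps)

lemma qmult_lincomb:
  "qmult D a (u1 * x + u2 * y, v1 * x + v2 * y) =
     pair_scale x (qmult D a (u1, v1)) + pair_scale y (qmult D a (u2, v2))"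
  by (simp add: qmult_def pair_scale_def algebra_simps)

definition lattice_mult :: "int \<Rightarrow> (int \<times> int) set \<Rightarrow> (int \<times> int) set \<Rightarrow> (int \<times> int) set" where
  "lattice_mult D L M = int_pair.span {qmult D z w | z w. z \<in> L \<and> w \<in> M}"

lemma lattice_mult_qmult_image:
  "lattice_mult D (qmult D a ` L) (qmult D b ` M) = qmult D (qmult D a b) ` lattice_mult D L M"
proof -
  have "{qmult D z w | z w. z \<in> qmult D a ` L \<and> w \<in> qmult D b ` M} =
        qmult D (qmult D a b) ` {qmult D z w | z w. z \<in> L \<and> w \<in> M}" (is "?l = ?r")
  proof
    show "?l \<subseteq> ?r"
    proof
      fix x assume "x \<in> ?l"
      then obtain z w where "z \<in> L" "w \<in> M" "x = qmult D (qmult D a b) (qmult D z w)"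
        by (auto simp: qmult_interchange)
      then show "x \<in> ?r" by blast
    qed
    show "?r \<subseteq> ?l"
    proof
      fix x assume "x \<in> ?r"
      then obtain z w where "z \<in> L" "w \<in> M" "x = qmult D (qmult D a z) (qmult D b w)"
        by (auto simp: qmult_interchange)
      then show "x \<in> ?l" by blast
    qed
  qed
  then show ?thesis
    unfolding lattice_mult_def by (simp add: module_hom.span_image[OF module_hom_qmult])
qed

definition lattice_homothetic :: "int \<Rightarrow> (int \<times> int) set \<Rightarrow> (int \<times> int) set \<Rightarrow> bool" where
  "lattice_homothetic D L M \<longleftrightarrow> (\<exists>\<alpha> \<beta>. \<alpha> \<noteq> 0 \<and> \<beta> \<noteq> 0 \<and> qmult D \<alpha> ` L = qmult D \<beta> ` M)"

lemma lattice_homothetic_mult: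
  assumes "D > 0" and "lattice_homothetic D L L'" and "lattice_homothetic D M M'"
  shows "lattice_homothetic D (lattice_mult D L M) (lattice_mult D L' M')"
proof -
  obtain \<alpha> \<beta> where \<alpha>\<beta>: "\<alpha> \<noteq> 0" "\<beta> \<noteq> 0" "qmult D \<alpha> ` L = qmult D \<beta> ` L'"
    using assms(2) unfolding lattice_homothetic_def by blast
  obtain \<gamma> \<delta> where \<gamma>\<delta>: "\<gamma> \<noteq> 0" "\<delta> \<noteq> 0" "qmult D \<gamma> ` M = qmult D \<delta> ` M'"
    using assms(3) unfolding lattice_homothetic_def by blast
  have "qmult D (qmult D \<alpha> \<gamma>) ` lattice_mult D L M =
        lattice_mult D (qmult D \<alpha> ` L) (qmult D \<gamma> ` M)"
    by (rule lattice_mult_qmult_image[symmetric])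
  also have "\<dots> = lattice_mult D (qmult D \<beta> ` L') (qmult D \<delta> ` M')"
    by (simp only: \<alpha>\<beta>(3) \<gamma>\<delta>(3))
  also have "\<dots> = qmult D (qmult D \<beta> \<delta>) ` lattice_mult D L' M'"
    by (rule lattice_mult_qmult_image)
  finally have "qmult D (qmult D \<alpha> \<gamma>) ` lattice_mult D L M =
      qmult D (qmult D \<beta> \<delta>) ` lattice_mult D L' M'" .
  moreover have "qmult D \<alpha> \<gamma> \<noteq> 0" "qmult D \<beta> \<delta> \<noteq> 0"
    using qmult_neq_0[OF assms(1)] \<alpha>\<beta>(1,2) \<gamma>\<delta>(1,2) by auto
  ultimately show ?thesis unfolding lattice_homothetic_def by blast
qed

text \<open>The lattice \<open>[a, b + \<surd>-D]\<close>, an ideal of \<open>\<int>[\<surd>-D]\<close> when \<open>a\<close> divides \<open>b\<^sup>2 + D\<close>.\<close>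

definition qlattice :: "int \<Rightarrow> int \<Rightarrow> (int \<times> int) set" where
  "qlattice a b = {z. a dvd fst z - b * snd z}"

lemma mem_qlattice_iff: "z \<in> qlattice a b \<longleftrightarrow> (\<exists>x y. z = (a * x + b * y, y))"
proof
  assume "z \<in> qlattice a b"
  then obtain x where "fst z - b * snd z = a * x" unfolding qlattice_def by auto
  then have "z = (a * x + b * snd z, snd z)" by (simp add: prod_eq_iff)
  then show "\<exists>x y. z = (a * x + b * y, y)" by blast
qed (auto simp: qlattice_def)

lemma qlattice_shift: "qlattice a (b + a * k) = qlattice a b"
proof -
  have "a dvd u - (b + a * k) * v \<longleftrightarrow> a dvd u - b * v" for u v
  proof -
    have "u - (b + a * k) * v = (u - b * v) + a * (- k * v)" by (simp add: algebra_simps)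
    then show ?thesis by (simp only: mult.commute[of a] dvd_add_times_triv_right_iff)
  qed
  then show ?thesis unfolding qlattice_def by simp
qed

lemma subspace_qlattice: "int_pair.subspace (qlattice a b)"
proof -
  have "a dvd fst z + fst w - b * (snd z + snd w)"
    if "a dvd fst z - b * snd z" and "a dvd fst w - b * snd w" for z w
  proof -
    have "fst z + fst w - b * (snd z + snd w) = (fst z - b * snd z) + (fst w - b * snd w)"
      by (simp add: algebra_simps)
    with that show ?thesis by (metis dvd_add)
  qed
  moreover have "a dvd k * fst z - b * (k * snd z)" if "a dvd fst z - b * snd z" for z k
  proof -
    have "k * fst z - b * (k * snd z) = k * (fst z - b * snd z)" by (simp add: algebra_simps)
    with that show ?thesis by (metis dvd_mult)
  qed
  ultimately show ?thesis
    unfolding int_pair.subspace_def qlattice_def pair_scale_def by auto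
qed

lemma qmult_mem_qlattice:
  assumes "b^2 + D = a1 * a2 * c" and "z \<in> qlattice a1 b" and "w \<in> qlattice a2 b"
  shows "qmult D z w \<in> qlattice (a1 * a2) b"
proof -
  obtain x y x' y' where z: "z = (a1 * x + b * y, y)" and w: "w = (a2 * x' + b * y', y')"
    using assms(2,3) by (auto simp: mem_qlattice_iff)
  have "fst (qmult D z w) - b * snd (qmult D z w) = a1 * a2 * (x * x') - (b^2 + D) * (y * y')"
    unfolding z w by (simp add: qmult_def power2_eq_square algebra_simps)
  also have "\<dots> = a1 * a2 * (x * x' - c * y * y')"
    unfolding assms(1) by (simp add: algebra_simps)
  finally show ?thesis unfolding qlattice_def by simp
qed

lemma qlattice_subset_subspace:
  assumes norm: "b^2 + D = a1 * a2 * c" and coprime: "gcd (gcd a1 a2) (2 * b) = 1"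
    and T: "int_pair.subspace T"
    and prods: "\<And>z w. z \<in> qlattice a1 b \<Longrightarrow> w \<in> qlattice a2 b \<Longrightarrow> qmult D z w \<in> T"
  shows "qlattice (a1 * a2) b \<subseteq> T"
proof
  have gens: "qmult D (a1, 0) (a2, 0) \<in> T" "qmult D (a1, 0) (b, 1) \<in> T"
      "qmult D (b, 1) (a2, 0) \<in> T" "qmult D (b, 1) (b, 1) \<in> T"
    by (simp_all add: prods qlattice_def)
  have e1: "(a1 * a2, 0) \<in> T" using gens(1) by (simp add: qmult_def)
  obtain u v t where bez: "u * a1 + v * a2 + t * (2 * b) = 1"
  proof -
    obtain s t where st: "s * gcd a1 a2 + t * (2 * b) = 1"
      using bezout_int[of "gcd a1 a2" "2 * b"] coprime by auto
    obtain u v where uv: "u * a1 + v * a2 = gcd a1 a2"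
      using bezout_int[of a1 a2] by auto
    have "(s * u) * a1 + (s * v) * a2 + t * (2 * b) = 1"
      using st unfolding uv[symmetric] by (simp add: algebra_simps)
    then show thesis by (rule that)
  qed
  \<comment> \<open>\<open>b + \<surd>-D = u a\<^sub>1 (b + \<surd>-D) + v a\<^sub>2 (b + \<surd>-D) + t (b + \<surd>-D)\<^sup>2 + t c a\<^sub>1 a\<^sub>2\<close>\<close>
  have "u * (a1 * b) + v * (a2 * b) + t * (b * b - D) + t * c * (a1 * a2)
        = b * (u * a1 + v * a2 + t * (2 * b)) + t * (a1 * a2 * c - (b^2 + D))"
    by (simp add: power2_eq_square algebra_simps)
  then have "(b, 1) = (u * (a1 * b) + v * (a2 * b) + t * (b * b - D) + t * c * (a1 * a2),
                       u * a1 + v * a2 + t * (2 * b))"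
    using bez norm by simp
  also have "\<dots> = pair_scale u (qmult D (a1, 0) (b, 1)) + pair_scale v (qmult D (b, 1) (a2, 0))
      + pair_scale t (qmult D (b, 1) (b, 1)) + pair_scale (t * c) (qmult D (a1, 0) (a2, 0))"
    by (simp add: qmult_def pair_scale_def algebra_simps)
  finally have e2: "(b, 1) \<in> T"
    by (rule ssubst) (intro int_pair.subspace_add int_pair.subspace_scale T gens)
  fix z assume "z \<in> qlattice (a1 * a2) b"
  then obtain x y where z: "z = (a1 * a2 * x + b * y, y)" by (auto simp: mem_qlattice_iff)
  have "z = pair_scale x (a1 * a2, 0) + pair_scale y (b, 1)"
    by (simp add: z pair_scale_def algebra_simps)
  also have "\<dots> \<in> T" by (intro int_pair.subspace_add int_pair.subspace_scale T e1 e2)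
  finally show "z \<in> T" .
qed

lemma lattice_mult_qlattice:
  assumes "b^2 + D = a1 * a2 * c" and "gcd (gcd a1 a2) (2 * b) = 1"
  shows "lattice_mult D (qlattice a1 b) (qlattice a2 b) = qlattice (a1 * a2) b"
  unfolding lattice_mult_def
proof (rule int_pair.span_unique)
  show "{qmult D z w | z w. z \<in> qlattice a1 b \<and> w \<in> qlattice a2 b} \<subseteq> qlattice (a1 * a2) b"
    using qmult_mem_qlattice[OF assms(1)] by blast
  show "int_pair.subspace (qlattice (a1 * a2) b)" by (rule subspace_qlattice)
  show "qlattice (a1 * a2) b \<subseteq> T"
    if "{qmult D z w | z w. z \<in> qlattice a1 b \<and> w \<in> qlattice a2 b} \<subseteq> T"
      and "int_pair.subspace T" for T
    using qlattice_subset_subspace[OF assms that(2)] that(1) by blast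
qed

section \<open>Forms and their lattices\<close>

definition form_lattice :: "bqf \<Rightarrow> (int \<times> int) set" where
  "form_lattice f = (case f of (a, b, c) \<Rightarrow> qlattice a (b div 2))"

lemma ppd_form_coeffs:
  assumes "(a, b, c) \<in> ppd_forms (-4 * D)"
  shows "a > 0" and "b = 2 * (b div 2)" and "(b div 2)^2 + D = a * c"
proof -
  have disc: "b^2 - 4 * a * c = -4 * D" and "bqf_posdef (a, b, c)"
    using assms by (auto simp: ppd_forms_def bqf_disc_def)
  then have "bqf_eval (a, b, c) 1 0 > 0" unfolding bqf_posdef_def by auto
  then show "a > 0" by (simp add: bqf_eval_def)
  have "even (b^2)"
  proof -
    have "b^2 = 2 * (2 * (a * c - D))" using disc by (simp add: algebra_simps)
    then show ?thesis by simp
  qed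
  then show b: "b = 2 * (b div 2)" by simp
  have "(2 * (b div 2))^2 - 4 * a * c = -4 * D" using disc by (subst (asm) b) simp
  then show "(b div 2)^2 + D = a * c" by (simp add: power2_eq_square algebra_simps)
qed

lemma qnorm_qlattice_point:
  assumes "b = 2 * b0" and "b0^2 + D = a * c"
  shows "qnorm D (a * x + b0 * y, y) = a * bqf_eval (a, b, c) x y"
proof -
  have "qnorm D (a * x + b0 * y, y) - a * bqf_eval (a, b, c) x y = (b0^2 + D - a * c) * y^2"
    by (simp add: assms(1) qnorm_def bqf_eval_def power2_eq_square algebra_simps)
  with assms(2) show ?thesis by simp
qed

lemma bqf_posdefI:
  assumes "D > 0" and "a > 0" and "b = 2 * b0" and "b0^2 + D = a * c"
  shows "bqf_posdef (a, b, c)"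
  unfolding bqf_posdef_def
proof (intro allI impI)
  fix x y :: int assume "(x, y) \<noteq> (0, 0)"
  with assms(2) have "(a * x + b0 * y, y) \<noteq> 0" by (auto simp: zero_prod_def)
  then have "a * bqf_eval (a, b, c) x y > 0"
    using qnorm_pos[OF assms(1)] qnorm_qlattice_point[OF assms(3,4)] by metis
  with assms(2) show "bqf_eval (a, b, c) x y > 0" by (simp add: zero_less_mult_iff)
qed

lemma qmult_image_qlattice_eqI:
  assumes det: "p * s - q * r = 1"
    and basis: "\<And>x y. qmult D \<alpha> (a' * x + b' * y, y) =
                       qmult D \<beta> (a * (p * x + q * y) + b * (r * x + s * y), r * x + s * y)"
  shows "qmult D \<alpha> ` qlattice a' b' = qmult D \<beta> ` qlattice a b"
proof
  show "qmult D \<alpha> ` qlattice a' b' \<subseteq> qmult D \<beta> ` qlattice a b"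
    by (auto simp: mem_qlattice_iff basis)
  show "qmult D \<beta> ` qlattice a b \<subseteq> qmult D \<alpha> ` qlattice a' b'"
  proof
    fix z assume "z \<in> qmult D \<beta> ` qlattice a b"
    then obtain u v where z: "z = qmult D \<beta> (a * u + b * v, v)" by (auto simp: mem_qlattice_iff)
    define x y where "x = s * u - q * v" and "y = p * v - r * u"
    have "p * x + q * y = (p * s - q * r) * u" "r * x + s * y = (p * s - q * r) * v"
      unfolding x_def y_def by (simp_all add: algebra_simps)
    then have "z = qmult D \<alpha> (a' * x + b' * y, y)" using z basis det by simp
    then show "z \<in> qmult D \<alpha> ` qlattice a' b'" by (auto simp: mem_qlattice_iff)
  qed
qed

lemma qmult_image_qlattice_subsetE:
  assumes "qmult D \<alpha> ` qlattice a' b' \<subseteq> qmult D \<beta> ` qlattice a b"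
  obtains p q r s where
    "\<And>x y. qmult D \<alpha> (a' * x + b' * y, y) =
           qmult D \<beta> (a * (p * x + q * y) + b * (r * x + s * y), r * x + s * y)"
    and "qnorm D \<alpha> * a' = qnorm D \<beta> * (a * (p * s - q * r))"
proof -
  have "(a', 0) \<in> qlattice a' b'" and "(b', 1) \<in> qlattice a' b'" by (simp_all add: qlattice_def)
  then have "qmult D \<alpha> (a', 0) \<in> qmult D \<beta> ` qlattice a b"
    and "qmult D \<alpha> (b', 1) \<in> qmult D \<beta> ` qlattice a b" using assms by auto
  then obtain p r q s where pr: "qmult D \<alpha> (a', 0) = qmult D \<beta> (a * p + b * r, r)"
    and qs: "qmult D \<alpha> (b', 1) = qmult D \<beta> (a * q + b * s, s)"
    by (auto simp: mem_qlattice_iff)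
  have "qmult D \<alpha> (a' * x + b' * y, y) =
        qmult D \<beta> (a * (p * x + q * y) + b * (r * x + s * y), r * x + s * y)" for x y
    using qmult_lincomb[of D \<alpha> a' x b' y 0 1] pr qs
      qmult_lincomb[of D \<beta> "a * p + b * r" x "a * q + b * s" y r s]
    by (simp add: algebra_simps)
  moreover have "qnorm D \<alpha> * a' = qnorm D \<beta> * (a * (p * s - q * r))"
    using det2_qmult[of D \<alpha> "(a', 0)" "(b', 1)"] pr qs
      det2_qmult[of D \<beta> "(a * p + b * r, r)" "(a * q + b * s, s)"]
    by (simp add: det2_def algebra_simps)
  ultimately show thesis using that by blast
qed

lemma bqf_eval_substitution_coeffs:
  assumes "\<And>x y. bqf_eval (a', b', c') x y = bqf_eval (a, b, c) (p * x + q * y) (r * x + s * y)"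
  shows "a' = a * p^2 + b * p * r + c * r^2"
    and "b' = 2 * a * p * q + b * (p * s + q * r) + 2 * c * r * s"
proof -
  show a': "a' = a * p^2 + b * p * r + c * r^2"
    using assms[of 1 0] by (simp add: bqf_eval_def)
  have c': "c' = a * q^2 + b * q * s + c * s^2"
    using assms[of 0 1] by (simp add: bqf_eval_def)
  have "a' + b' + c' = a * (p + q)^2 + b * (p + q) * (r + s) + c * (r + s)^2"
    using assms[of 1 1] by (simp add: bqf_eval_def)
  then show "b' = 2 * a * p * q + b * (p * s + q * r) + 2 * c * r * s"
    using a' c' by (simp add: power2_eq_square algebra_simps)
qed

lemma qmult_basis_change:
  assumes det: "p * s - q * r = 1" and "b^2 + D = a * c"
    and a': "a' = a * p^2 + 2 * b * p * r + c * r^2"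
    and b': "b' = a * p * q + b * (p * s + q * r) + c * r * s"
  shows "qmult D (a * p + b * r, r) (a' * x + b' * y, y) =
         qmult D (a', 0) (a * (p * x + q * y) + b * (r * x + s * y), r * x + s * y)"
proof -
  have D: "D = a * c - b^2" using assms(2) by simp
  have "qmult D (a * p + b * r, r) (a' * x + b' * y, y)
               - qmult D (a', 0) (a * (p * x + q * y) + b * (r * x + s * y), r * x + s * y)
             = pair_scale (y * (p * s - q * r - 1)) (D * r, - (a * p + b * r))"
    unfolding qmult_def pair_scale_def a' b' D by (simp add: power2_eq_square algebra_simps)
  also have "\<dots> = 0" using det by (simp add: pair_scale_def zero_prod_def)
  finally show ?thesis by (rule right_minus_eq[THEN iffD1])
qed

lemma lattice_homothetic_if_bqf_equiv:
  assumes f: "f \<in> ppd_forms (-4 * D)" and g: "g \<in> ppd_forms (-4 * D)" and "bqf_equiv f g"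
  shows "lattice_homothetic D (form_lattice g) (form_lattice f)"
proof -
  obtain a b c a' b' c' where fg: "f = (a, b, c)" "g = (a', b', c')" by (metis prod_cases3)
  define b0 b1 where "b0 = b div 2" and "b1 = b' div 2"
  have a: "a > 0" "b = 2 * b0" "b0^2 + D = a * c"
    using ppd_form_coeffs[of a b c D] f fg b0_def by auto
  have a': "a' > 0" "b' = 2 * b1"
    using ppd_form_coeffs[of a' b' c' D] g fg b1_def by auto
  obtain p q r s where det: "p * s - q * r = 1"
    and ev: "\<And>x y. bqf_eval g x y = bqf_eval f (p * x + q * y) (r * x + s * y)"
    using assms(3) unfolding bqf_equiv_def by blast
  note coeffs = bqf_eval_substitution_coeffs[OF ev[unfolded fg]]
  \<comment> \<open>\<open>\<alpha> = a p + r (b\<^sub>0 + \<surd>-D)\<close> is the point of the lattice of \<open>f\<close> with coordinates \<open>(p, r)\<close>\<close>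
  define \<alpha> \<beta> where "\<alpha> = (a * p + b0 * r, r)" and "\<beta> = (a', 0::int)"
  have "qmult D \<alpha> (a' * x + b1 * y, y)
      = qmult D \<beta> (a * (p * x + q * y) + b0 * (r * x + s * y), r * x + s * y)" for x y
    unfolding \<alpha>_def \<beta>_def
    by (rule qmult_basis_change[OF det a(3)]) (use coeffs a(2) a'(2) in simp_all)
  then have "qmult D \<alpha> ` qlattice a' b1 = qmult D \<beta> ` qlattice a b0"
    by (rule qmult_image_qlattice_eqI[OF det])
  moreover have "qnorm D \<alpha> = a * a'"
    using qnorm_qlattice_point[OF a(2,3), of p r] ev[of 1 0] fg by (simp add: \<alpha>_def bqf_eval_def)
  then have "\<alpha> \<noteq> 0" using a(1) a'(1) by auto
  moreover have "\<beta> \<noteq> 0" using a'(1) by (simp add: \<beta>_def zero_prod_def)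
  ultimately show ?thesis
    unfolding lattice_homothetic_def form_lattice_def fg b0_def b1_def
    by (intro exI[of _ \<alpha>] exI[of _ \<beta>]) simp
qed

lemma bqf_equiv_if_lattice_homothetic:
  assumes "D > 0" and f: "f \<in> ppd_forms (-4 * D)" and g: "g \<in> ppd_forms (-4 * D)"
    and "lattice_homothetic D (form_lattice g) (form_lattice f)"
  shows "bqf_equiv f g"
proof -
  obtain a b c a' b' c' where fg: "f = (a, b, c)" "g = (a', b', c')" by (metis prod_cases3)
  define b0 b1 where "b0 = b div 2" and "b1 = b' div 2"
  have a: "a > 0" "b = 2 * b0" "b0^2 + D = a * c"
    using ppd_form_coeffs[of a b c D] f fg b0_def by auto
  have a': "a' > 0" "b' = 2 * b1" "b1^2 + D = a' * c'"
    using ppd_form_coeffs[of a' b' c' D] g fg b1_def by auto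
  have "lattice_homothetic D (qlattice a' b1) (qlattice a b0)"
    using assms(4) by (simp add: form_lattice_def fg b0_def b1_def)
  then obtain \<alpha> \<beta> where "\<alpha> \<noteq> 0" "\<beta> \<noteq> 0"
    and eq: "qmult D \<alpha> ` qlattice a' b1 = qmult D \<beta> ` qlattice a b0"
    unfolding lattice_homothetic_def by blast
  obtain p q r s where basis: "\<And>x y. qmult D \<alpha> (a' * x + b1 * y, y) =
      qmult D \<beta> (a * (p * x + q * y) + b0 * (r * x + s * y), r * x + s * y)"
    and norm: "qnorm D \<alpha> * a' = qnorm D \<beta> * (a * (p * s - q * r))"
    by (rule qmult_image_qlattice_subsetE[OF equalityD1[OF eq]]) blast
  obtain p' q' r' s' where "\<And>x y. qmult D \<beta> (a * x + b0 * y, y) =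
      qmult D \<alpha> (a' * (p' * x + q' * y) + b1 * (r' * x + s' * y), r' * x + s' * y)"
    and norm': "qnorm D \<beta> * a = qnorm D \<alpha> * (a' * (p' * s' - q' * r'))"
    by (rule qmult_image_qlattice_subsetE[OF equalityD2[OF eq]]) blast
  have pos: "qnorm D \<alpha> * a' > 0" "qnorm D \<beta> * a > 0"
    using qnorm_pos[OF assms(1)] \<open>\<alpha> \<noteq> 0\<close> \<open>\<beta> \<noteq> 0\<close> a(1) a'(1) by simp_all
  \<comment> \<open>comparing indices both ways gives \<open>det \<cdot> det' = 1\<close>; positive norms fix the sign\<close>
  have det: "p * s - q * r = 1"
  proof -
    let ?d = "p * s - q * r" and ?d' = "p' * s' - q' * r'"
    have "qnorm D \<alpha> * a' = qnorm D \<beta> * a * ?d" using norm by (simp add: mult.assoc)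
    also have "\<dots> = (qnorm D \<alpha> * a') * (?d' * ?d)" by (subst norm') (simp add: mult_ac)
    finally have "?d' * ?d = 1" using pos(1) by auto
    moreover have "?d > 0"
      using zero_less_mult_pos[of "qnorm D \<beta> * a" ?d] norm pos by (simp add: mult.assoc)
    ultimately show ?thesis using pos_zmult_eq_1_iff by (metis mult.commute)
  qed
  have "bqf_eval g x y = bqf_eval f (p * x + q * y) (r * x + s * y)" for x y
  proof -
    have "qnorm D \<alpha> * (a' * bqf_eval g x y) =
          qnorm D \<beta> * (a * bqf_eval f (p * x + q * y) (r * x + s * y))"
      using arg_cong[OF basis[of x y], of "qnorm D"] fg
      by (simp add: qnorm_qmult qnorm_qlattice_point[OF a(2,3)] qnorm_qlattice_point[OF a'(2,3)])
    with norm det pos show ?thesis by (auto simp: mult.assoc[symmetric])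
  qed
  with det show ?thesis unfolding bqf_equiv_def by blast
qed

lemma form_lattice_dirichlet_composite:
  assumes "dirichlet_composite (-4 * D) f1 f2 h"
  shows "form_lattice h = lattice_mult D (form_lattice f1) (form_lattice f2)"
proof -
  obtain a1 b1 c1 a2 b2 c2 where f: "f1 = (a1, b1, c1)" "f2 = (a2, b2, c2)" by (metis prod_cases3)
  obtain B where coprime: "gcd (gcd a1 a2) ((b1 + b2) div 2) = 1"
    and B1: "[B = b1] (mod 2 * a1)" and B2: "[B = b2] (mod 2 * a2)"
    and B: "[B^2 = -4 * D] (mod 4 * a1 * a2)"
    and h: "h = (a1 * a2, B, (B^2 - (-4 * D)) div (4 * a1 * a2))"
    using assms unfolding dirichlet_composite_def f by auto
  have dvd: "4 * (a1 * a2) dvd B^2 + 4 * D"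
    using B by (simp add: cong_iff_dvd_diff mult.assoc)
  then have "4 dvd B^2 + 4 * D" using dvd_trans[of 4 "4 * (a1 * a2)"] by simp
  then have "4 dvd B^2" using dvd_add_left_iff[of 4 "4 * D" "B^2"] by simp
  then have "even B" using dvd_trans[of 2 4 "B^2"] by simp
  then obtain b where Bb: "B = 2 * b" by blast
  have "4 * (a1 * a2) dvd 4 * (b^2 + D)" using dvd Bb by (simp add: power2_eq_square algebra_simps)
  then have "a1 * a2 dvd b^2 + D" by (metis dvd_mult_cancel_left zero_neq_numeral)
  then obtain c where norm: "b^2 + D = a1 * a2 * c" by (rule dvdE)
  obtain k1 where k1: "b1 = B + 2 * a1 * k1" using B1 by (auto simp: cong_iff_lin)
  obtain k2 where k2: "b2 = B + 2 * a2 * k2" using B2 by (auto simp: cong_iff_lin)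
  have "form_lattice f1 = qlattice a1 (b + a1 * k1)" using f k1 Bb by (simp add: form_lattice_def)
  then have L1: "form_lattice f1 = qlattice a1 b" by (simp add: qlattice_shift)
  have "form_lattice f2 = qlattice a2 (b + a2 * k2)" using f k2 Bb by (simp add: form_lattice_def)
  then have L2: "form_lattice f2 = qlattice a2 b" by (simp add: qlattice_shift)
  have Lh: "form_lattice h = qlattice (a1 * a2) b" using h Bb by (simp add: form_lattice_def)
  have "gcd a1 a2 dvd a1 * k1 + a2 * k2" by (intro dvd_add dvd_mult2 gcd_dvd1 gcd_dvd2)
  then obtain t where t: "a1 * k1 + a2 * k2 = gcd a1 a2 * t" by (rule dvdE)
  have "b1 + b2 = 2 * (a1 * k1 + a2 * k2 + 2 * b)" using k1 k2 Bb by (simp add: algebra_simps)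
  then have "(b1 + b2) div 2 = t * gcd a1 a2 + 2 * b" by (simp add: t mult.commute)
  then have "gcd (gcd a1 a2) (2 * b) = 1" using coprime by (simp add: gcd_add_mult)
  then show ?thesis using lattice_mult_qlattice[OF norm] L1 L2 Lh by simp
qed

lemma bqf_equiv_dirichlet_composite:
  assumes "D > 0"
    and "f1 \<in> ppd_forms (-4 * D)" "f1' \<in> ppd_forms (-4 * D)"
    and "f2 \<in> ppd_forms (-4 * D)" "f2' \<in> ppd_forms (-4 * D)"
    and "h \<in> ppd_forms (-4 * D)" "h' \<in> ppd_forms (-4 * D)"
    and "bqf_equiv f1 f1'" "bqf_equiv f2 f2'"
    and "dirichlet_composite (-4 * D) f1 f2 h" "dirichlet_composite (-4 * D) f1' f2' h'"
  shows "bqf_equiv h h'"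
proof -
  have "lattice_homothetic D (form_lattice f1') (form_lattice f1)"
    and "lattice_homothetic D (form_lattice f2') (form_lattice f2)"
    using lattice_homothetic_if_bqf_equiv assms(2-5,8,9) by blast+
  then have "lattice_homothetic D (form_lattice h') (form_lattice h)"
    using lattice_homothetic_mult[OF assms(1)] form_lattice_dirichlet_composite assms(10,11)
    by simp
  then show ?thesis using bqf_equiv_if_lattice_homothetic assms(1,6,7) by blast
qed

section \<open>The form class group\<close>

lemma bqf_equiv_refl: "bqf_equiv f f"
  unfolding bqf_equiv_def by (intro exI[of _ 1] exI[of _ 0]) simp

lemma bqf_equiv_sym:
  assumes "bqf_equiv f g"
  shows "bqf_equiv g f"
proof -
  obtain p q r s where det: "p * s - q * r = 1"
    and ev: "\<And>x y. bqf_eval g x y = bqf_eval f (p * x + q * y) (r * x + s * y)"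
    using assms unfolding bqf_equiv_def by blast
  have "bqf_eval f x y = bqf_eval g (s * x + (- q) * y) ((- r) * x + p * y)" for x y
  proof -
    have "p * (s * x + (- q) * y) + q * ((- r) * x + p * y) = (p * s - q * r) * x"
      and "r * (s * x + (- q) * y) + s * ((- r) * x + p * y) = (p * s - q * r) * y"
      by (simp_all add: algebra_simps)
    with ev det show ?thesis by simp
  qed
  moreover have "s * p - (- q) * (- r) = 1" using det by (simp add: algebra_simps)
  ultimately show ?thesis unfolding bqf_equiv_def by blast
qed

lemma bqf_equiv_trans:
  assumes "bqf_equiv f g" and "bqf_equiv g h"
  shows "bqf_equiv f h"
proof -
  obtain p q r s where det: "p * s - q * r = 1"
    and ev: "\<And>x y. bqf_eval g x y = bqf_eval f (p * x + q * y) (r * x + s * y)"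
    using assms(1) unfolding bqf_equiv_def by blast
  obtain p' q' r' s' where det': "p' * s' - q' * r' = 1"
    and ev': "\<And>x y. bqf_eval h x y = bqf_eval g (p' * x + q' * y) (r' * x + s' * y)"
    using assms(2) unfolding bqf_equiv_def by blast
  have "bqf_eval h x y = bqf_eval f ((p * p' + q * r') * x + (p * q' + q * s') * y)
                                    ((r * p' + s * r') * x + (r * q' + s * s') * y)" for x y
  proof -
    have "p * (p' * x + q' * y) + q * (r' * x + s' * y)
            = (p * p' + q * r') * x + (p * q' + q * s') * y"
      and "r * (p' * x + q' * y) + s * (r' * x + s' * y)
            = (r * p' + s * r') * x + (r * q' + s * s') * y"
      by (simp_all add: algebra_simps)
    with ev ev' show ?thesis by simp
  qed
  moreover have "(p * p' + q * r') * (r * q' + s * s') - (p * q' + q * s') * (r * p' + s * r')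
                 = (p * s - q * r) * (p' * s' - q' * r')"
    by (simp add: algebra_simps)
  ultimately show ?thesis unfolding bqf_equiv_def using det det' by fastforce
qed

lemma equiv_bqf_equiv_rel: "equiv (ppd_forms Delta) (bqf_equiv_rel Delta)"
  unfolding equiv_def refl_on_def sym_def trans_def bqf_equiv_rel_def
  by (auto intro: bqf_equiv_refl bqf_equiv_sym bqf_equiv_trans)

abbreviation form_class :: "int \<Rightarrow> bqf \<Rightarrow> bqf set" where
  "form_class Delta f \<equiv> bqf_equiv_rel Delta `` {f}"

lemma form_class_in_carrier:
  "f \<in> ppd_forms Delta \<Longrightarrow> form_class Delta f \<in> carrier (form_class_group Delta)"
  by (simp add: form_class_group_def form_classes_def quotientI)

lemma form_class_group_mult:
  assumes "D > 0" and f1: "f1 \<in> ppd_forms (-4 * D)" and f2: "f2 \<in> ppd_forms (-4 * D)"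
    and h: "h \<in> ppd_forms (-4 * D)" and comp: "dirichlet_composite (-4 * D) f1 f2 h"
  shows "form_class (-4 * D) f1 \<otimes>\<^bsub>form_class_group (-4 * D)\<^esub> form_class (-4 * D) f2
         = form_class (-4 * D) h"
  unfolding form_class_group_def monoid.simps
proof (rule the_equality)
  note equiv = equiv_bqf_equiv_rel[of "-4 * D"]
  have self: "g \<in> form_class (-4 * D) g" if "g \<in> ppd_forms (-4 * D)" for g
    using equiv_class_self[OF equiv that] .
  show "form_class (-4 * D) h \<in> form_classes (-4 * D) \<and>
    (\<exists>f1'\<in>form_class (-4 * D) f1. \<exists>f2'\<in>form_class (-4 * D) f2.
       \<exists>h'\<in>form_class (-4 * D) h. dirichlet_composite (-4 * D) f1' f2' h')"
    using h comp self[OF f1] self[OF f2] self[OF h] unfolding form_classes_def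
    by (blast intro: quotientI)
  fix Z assume "Z \<in> form_classes (-4 * D) \<and>
    (\<exists>f1'\<in>form_class (-4 * D) f1. \<exists>f2'\<in>form_class (-4 * D) f2.
       \<exists>h'\<in>Z. dirichlet_composite (-4 * D) f1' f2' h')"
  then obtain f1' f2' h' z where Z: "Z = form_class (-4 * D) z" and "z \<in> ppd_forms (-4 * D)"
    and "(f1, f1') \<in> bqf_equiv_rel (-4 * D)" and "(f2, f2') \<in> bqf_equiv_rel (-4 * D)"
    and zh': "(z, h') \<in> bqf_equiv_rel (-4 * D)" and comp': "dirichlet_composite (-4 * D) f1' f2' h'"
    unfolding form_classes_def by (auto elim: quotientE)
  then have "bqf_equiv h h'"
    using bqf_equiv_dirichlet_composite[OF assms(1) f1 _ f2 _ h _ _ _ comp comp']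
    by (auto simp: bqf_equiv_rel_def)
  then have "(h, h') \<in> bqf_equiv_rel (-4 * D)"
    using h zh' by (auto simp: bqf_equiv_rel_def)
  then show "Z = form_class (-4 * D) h"
    using Z zh' equiv_class_eq[OF equiv] by metis
qed

lemma norm_form_in_ppd_forms: "D > 0 \<Longrightarrow> (1, 0, D) \<in> ppd_forms (-4 * D)"
  using bqf_posdefI[of D 1 0 0 D]
  by (simp add: ppd_forms_def bqf_disc_def bqf_primitive_def)

lemma dirichlet_composite_norm_form: "dirichlet_composite (-4 * D) (1, 0, D) (1, 0, D) (1, 0, D)"
  unfolding dirichlet_composite_def by (auto intro!: exI[of _ 0] simp: cong_def)

lemma elem_abelian_2_square:
  assumes "y \<in> carrier (elem_abelian_2 n)"
  shows "y \<otimes>\<^bsub>elem_abelian_2 n\<^esub> y = \<one>\<^bsub>elem_abelian_2 n\<^esub>"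
proof -
  have "(\<lambda>i\<in>{..<n}. (y i + y i) mod int 2) = (\<lambda>i\<in>{..<n}. (0::int))"
    by (rule restrict_ext) presburger
  then show ?thesis unfolding elem_abelian_2_def by simp
qed

text \<open>Nothing but the isomorphism is known about \<open>G\<close>, so the squares are assumed to lie in
  the carrier.\<close>

lemma squares_eq_if_iso_elem_abelian_2:
  assumes "G \<cong> elem_abelian_2 n"
    and "X \<in> carrier G" "Y \<in> carrier G" "X \<otimes>\<^bsub>G\<^esub> X \<in> carrier G" "Y \<otimes>\<^bsub>G\<^esub> Y \<in> carrier G"
  shows "X \<otimes>\<^bsub>G\<^esub> X = Y \<otimes>\<^bsub>G\<^esub> Y"
proof -
  obtain \<phi> where \<phi>: "\<phi> \<in> iso G (elem_abelian_2 n)" using assms(1) unfolding is_iso_def by blast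
  then have "\<phi> (U \<otimes>\<^bsub>G\<^esub> V) = \<phi> U \<otimes>\<^bsub>elem_abelian_2 n\<^esub> \<phi> V"
    and "\<phi> U \<in> carrier (elem_abelian_2 n)" if "U \<in> carrier G" "V \<in> carrier G" for U V
    using that by (auto simp: iso_def hom_def)
  then have "\<phi> (X \<otimes>\<^bsub>G\<^esub> X) = \<phi> (Y \<otimes>\<^bsub>G\<^esub> Y)"
    using assms(2,3) by (simp add: elem_abelian_2_square)
  moreover have "inj_on \<phi> (carrier G)" using \<phi> by (simp add: iso_def bij_betw_def)
  ultimately show ?thesis using assms(4,5) by (auto dest: inj_onD)
qed

lemma bqf_equiv_norm_form_if_square:
  assumes "D > 0" and "\<exists>n. form_class_group (-4 * D) \<cong> elem_abelian_2 n"
    and f: "f \<in> ppd_forms (-4 * D)" and h: "h \<in> ppd_forms (-4 * D)"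
    and "dirichlet_composite (-4 * D) f f h"
  shows "bqf_equiv (1, 0, D) h"
proof -
  let ?G = "form_class_group (-4 * D)"
  have P: "(1, 0, D) \<in> ppd_forms (-4 * D)" using assms(1) by (rule norm_form_in_ppd_forms)
  have square_f: "form_class (-4 * D) f \<otimes>\<^bsub>?G\<^esub> form_class (-4 * D) f = form_class (-4 * D) h"
    using form_class_group_mult assms(1,3-5) by blast
  have square_P: "form_class (-4 * D) (1, 0, D) \<otimes>\<^bsub>?G\<^esub> form_class (-4 * D) (1, 0, D)
                  = form_class (-4 * D) (1, 0, D)"
    using form_class_group_mult assms(1) P dirichlet_composite_norm_form by blast
  have "form_class (-4 * D) h = form_class (-4 * D) (1, 0, D)"
    using squares_eq_if_iso_elem_abelian_2[of ?G _ "form_class (-4 * D) f"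
        "form_class (-4 * D) (1, 0, D)"] assms(2) square_f square_P form_class_in_carrier f h P
    by auto
  then have "((1, 0, D), h) \<in> bqf_equiv_rel (-4 * D)"
    using eq_equiv_class_iff[OF equiv_bqf_equiv_rel P h] by simp
  then show ?thesis by (simp add: bqf_equiv_rel_def)
qed

lemma coprime_rep_if_bqf_equiv_norm_form:
  assumes "bqf_equiv (1, 0, D) (m, b, k)"
  obtains x y where "m = x^2 + D * y^2" and "coprime x y"
proof -
  obtain p q r s where det: "p * s - q * r = 1"
    and ev: "\<And>x y. bqf_eval (m, b, k) x y = bqf_eval (1, 0, D) (p * x + q * y) (r * x + s * y)"
    using assms unfolding bqf_equiv_def by blast
  have "m = p^2 + D * r^2" using ev[of 1 0] by (simp add: bqf_eval_def)
  moreover have "gcd p r dvd p * s - q * r" by (simp add: dvd_diff)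
  then have "coprime p r" using det by (simp add: coprime_iff_gcd_eq_1)
  ultimately show thesis using that by blast
qed

section \<open>Square roots modulo \<open>c\<close> and primitive solutions\<close>

lemma Legendre_eq_1_iff: "Legendre a p = 1 \<longleftrightarrow> QuadRes p a \<and> \<not> p dvd a"
  by (simp add: Legendre_def cong_0_iff)

lemma QuadRes_mult_coprime:
  fixes m n a :: int
  assumes "coprime m n" and "QuadRes m a" and "QuadRes n a"
  shows "QuadRes (m * n) a"
proof -
  obtain x y where x: "[x^2 = a] (mod m)" and y: "[y^2 = a] (mod n)"
    using assms(2,3) unfolding QuadRes_def by blast
  obtain z where "[z = x] (mod m)" and "[z = y] (mod n)"
    using binary_chinese_remainder_int[OF assms(1)] by blast
  then have "[z^2 = a] (mod m)" and "[z^2 = a] (mod n)"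
    using x y by (blast intro: cong_trans cong_pow)+
  then have "[z^2 = a] (mod m * n)" using assms(1) by (rule coprime_cong_mult)
  then show ?thesis unfolding QuadRes_def by blast
qed

text \<open>Hensel lifting: the derivative \<open>2 x\<close> of \<open>x\<^sup>2 - a\<close> is a unit modulo \<open>p\<close>.\<close>
lemma QuadRes_mult_prime:
  fixes p m a :: int
  assumes "prime p" and "odd p" and "\<not> p dvd a" and "p dvd m" and "QuadRes m a"
  shows "QuadRes (p * m) a"
proof -
  obtain x where "[x^2 = a] (mod m)" using assms(5) unfolding QuadRes_def by blast
  then obtain s where s: "x^2 - a = m * s" by (auto simp: cong_iff_dvd_diff elim: dvdE)
  have "\<not> p dvd x"
  proof
    assume "p dvd x"
    then have "p dvd x^2 - m * s" using assms(4) by (simp add: power2_eq_square dvd_diff)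
    moreover have "x^2 - m * s = a" using s by simp
    ultimately show False using assms(3) by simp
  qed
  then have "coprime (2 * x) p"
    using assms(1,2) by (simp add: prime_imp_coprime coprime_commute)
  then obtain w where "[2 * x * w = 1] (mod p)" using cong_solve_coprime_int by blast
  then have "p dvd 2 * x * w - 1" by (simp add: cong_iff_dvd_diff)
  define t where "t = - s * w"
  have "s + 2 * x * t = - s * (2 * x * w - 1)" unfolding t_def by (simp add: algebra_simps)
  with \<open>p dvd 2 * x * w - 1\<close> assms(4) have "p dvd s + 2 * x * t + t^2 * m" by simp
  then obtain k where k: "s + 2 * x * t + t^2 * m = p * k" by (rule dvdE)
  have "(x + t * m)^2 - a = m * (s + 2 * x * t + t^2 * m)"
    using s by (simp add: power2_eq_square algebra_simps)
  also have "\<dots> = (p * m) * k" unfolding k by (simp add: mult_ac)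
  finally have "p * m dvd (x + t * m)^2 - a" by (rule dvdI)
  then show ?thesis unfolding QuadRes_def cong_iff_dvd_diff by blast
qed

lemma QuadRes_if_Legendre_prime_factors:
  fixes m :: nat and a :: int
  assumes "m > 0" and "\<forall>p \<in> prime_factors m. odd p \<and> Legendre a (int p) = 1"
  shows "QuadRes (int m) a"
  using assms
proof (induction m rule: less_induct)
  case (less m)
  show ?case
  proof (cases "m = 1")
    case True
    then show ?thesis by (simp add: QuadRes_def)
  next
    case False
    then obtain p where p: "prime p" "p dvd m" using prime_factor_nat by blast
    then obtain m' where m: "m = p * m'" by blast
    with less.prems have "m' > 0" by simp
    have "p \<in> prime_factors m" using p less.prems by (simp add: in_prime_factors_iff)
    with less.prems have odd: "odd (int p)" and leg: "QuadRes (int p) a" "\<not> int p dvd a"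
      by (simp_all add: Legendre_eq_1_iff)
    have "m' < m" using m \<open>m' > 0\<close> prime_gt_1_nat[OF p(1)] by simp
    moreover have "\<forall>q \<in> prime_factors m'. odd q \<and> Legendre a (int q) = 1"
      using less.prems m \<open>m' > 0\<close> by (auto simp: in_prime_factors_iff)
    ultimately have IH: "QuadRes (int m') a" using less.IH \<open>m' > 0\<close> by blast
    show ?thesis
    proof (cases "p dvd m'")
      case True
      then show ?thesis
        using QuadRes_mult_prime[of "int p" a "int m'"] p(1) odd leg IH m by simp
    next
      case False
      then have "coprime (int p) (int m')" using p(1) by (simp add: prime_imp_coprime)
      then show ?thesis using QuadRes_mult_coprime leg(1) IH m by simp
    qed
  qed
qed

lemma QuadRes_neg_if_dvd_norm:
  fixes p a b D :: int
  assumes "prime p" and "p dvd a^2 + D * b^2" and "\<not> p dvd b"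
  shows "QuadRes p (- D)"
proof -
  have "coprime b p" using prime_imp_coprime[OF assms(1,3)] coprime_commute by blast
  then obtain w where "[b * w = 1] (mod p)" using cong_solve_coprime_int by blast
  then have "p dvd b * w - 1" by (simp add: cong_iff_dvd_diff)
  then have "p dvd w^2 * (a^2 + D * b^2) - D * (b * w - 1) * (b * w + 1)"
    using assms(2) by (intro dvd_diff) (simp_all add: dvd_mult dvd_mult2)
  moreover have "w^2 * (a^2 + D * b^2) - D * (b * w - 1) * (b * w + 1) = (a * w)^2 - (- D)"
    by (simp add: power2_eq_square algebra_simps)
  ultimately have "[(a * w)^2 = - D] (mod p)" by (simp add: cong_iff_dvd_diff)
  then show ?thesis unfolding QuadRes_def by blast
qed

lemma Legendre_eq_1_if_primitive_solution:
  fixes D :: int and a b c p :: nat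
  assumes "squarefree D" and sol: "int a ^ 2 + D * int b ^ 2 = int c ^ 2"
    and coprime: "gcd (gcd a b) c = 1" and p: "p \<in> prime_factors c"
  shows "Legendre (- D) (int p) = 1"
proof -
  have prime: "prime (int p)" and pc: "int p dvd int c" using p by (auto simp: in_prime_factors_iff)
  have pa: "int p dvd int a" if "int p dvd D * int b ^ 2"
  proof -
    have "int p dvd int c ^ 2" using pc by (simp add: power2_eq_square)
    then have "int p dvd int c ^ 2 - D * int b ^ 2" using that by (rule dvd_diff)
    moreover have "int c ^ 2 - D * int b ^ 2 = int a ^ 2" using sol by linarith
    ultimately have "int p dvd int a ^ 2" by simp
    then show ?thesis using prime by (simp add: prime_dvd_power_iff)
  qed
  have pb: "\<not> int p dvd int b"
  proof
    assume "int p dvd int b"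
    moreover from this have "int p dvd D * int b ^ 2" by (simp add: dvd_mult power2_eq_square)
    then have "int p dvd int a" by (rule pa)
    ultimately have "p dvd gcd (gcd a b) c" using pc by (simp add: gcd_greatest)
    with coprime prime show False by simp
  qed
  have pD: "\<not> int p dvd D"
  proof
    assume "int p dvd D"
    then have "int p dvd int a" by (intro pa) simp
    then have "int p ^ 2 dvd int c ^ 2 - int a ^ 2" using pc by (simp add: dvd_diff dvd_power_same)
    moreover have "int c ^ 2 - int a ^ 2 = D * int b ^ 2" using sol by linarith
    ultimately have "int p ^ 2 dvd D * int b ^ 2" by simp
    moreover have "coprime (int p ^ 2) (int b ^ 2)" using pb prime by (simp add: prime_imp_coprime)
    ultimately have "int p ^ 2 dvd D" by (simp add: coprime_dvd_mult_left_iff)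
    with \<open>squarefree D\<close> prime show False by (metis squarefree_def not_prime_unit power2_eq_square)
  qed
  have "int p dvd int a ^ 2 + D * int b ^ 2" using pc unfolding sol by (simp add: power2_eq_square)
  then have "QuadRes (int p) (- D)" using QuadRes_neg_if_dvd_norm prime pb by blast
  with pD show ?thesis by (simp add: Legendre_eq_1_iff)
qed

lemma coprime_if_prime_factors_not_dvd:
  fixes k :: int and c :: nat
  assumes "c > 0" and "\<And>p. p \<in> prime_factors c \<Longrightarrow> \<not> int p dvd k"
  shows "coprime k (int c)"
proof (rule coprimeI)
  fix d assume dk: "d dvd k" and dc: "d dvd int c"
  show "is_unit d"
  proof (rule ccontr)
    assume "\<not> is_unit d"
    then obtain q where q: "prime q" "q dvd d" using prime_factor_int[of d] by auto
    then have "q > 0" by (simp add: prime_gt_0_int)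
    have "q dvd int c" using q(2) dc by (rule dvd_trans)
    with \<open>q > 0\<close> have "nat q dvd c" by (simp add: nat_dvd_iff)
    with q(1) assms(1) have "nat q \<in> prime_factors c" by (simp add: in_prime_factors_iff)
    moreover have "int (nat q) dvd k" using \<open>q > 0\<close> q(2) dk by (simp add: dvd_trans)
    ultimately show False using assms(2) by blast
  qed
qed

lemma square_root_form_composite:
  assumes "D > 0" and "m > 0" and k: "x^2 + D = m^2 * k" and coprime: "coprime (2 * x) m"
  shows "(m, 2 * x, m * k) \<in> ppd_forms (-4 * D)" and "(m^2, 2 * x, k) \<in> ppd_forms (-4 * D)"
    and "dirichlet_composite (-4 * D) (m, 2 * x, m * k) (m, 2 * x, m * k) (m^2, 2 * x, k)"
proof -
  have "(2 * x)^2 - 4 * m * (m * k) = -4 * D" and "(2 * x)^2 - 4 * m^2 * k = -4 * D"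
    using k by (simp_all add: power2_eq_square algebra_simps)
  moreover have "gcd m (2 * x) = 1" and "gcd (m^2) (2 * x) = 1"
    using coprime by (simp_all add: coprime_commute coprime_iff_gcd_eq_1[symmetric])
  moreover have "bqf_posdef (m, 2 * x, m * k)" and "bqf_posdef (m^2, 2 * x, k)"
    using bqf_posdefI[OF assms(1,2), of "2 * x" x "m * k"]
      bqf_posdefI[OF assms(1), of "m^2" "2 * x" x k] k assms(2)
    by (simp_all add: power2_eq_square algebra_simps)
  ultimately show "(m, 2 * x, m * k) \<in> ppd_forms (-4 * D)"
    and "(m^2, 2 * x, k) \<in> ppd_forms (-4 * D)"
    by (simp_all add: ppd_forms_def bqf_disc_def bqf_primitive_def)
  have "(2 * x)^2 - (-4 * D) = 4 * m * m * k"
    using k by (simp add: power2_eq_square algebra_simps)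
  with assms(2) \<open>gcd m (2 * x) = 1\<close> show
    "dirichlet_composite (-4 * D) (m, 2 * x, m * k) (m, 2 * x, m * k) (m^2, 2 * x, k)"
    unfolding dirichlet_composite_def
    by (auto intro!: exI[of _ "2 * x"] simp: cong_iff_dvd_diff power2_eq_square)
qed

lemma primitive_solution_if_Legendre:
  fixes D :: int and c :: nat
  assumes "D > 0" and iso: "\<exists>n. form_class_group (-4 * D) \<cong> elem_abelian_2 n"
    and "odd c" and leg: "\<forall>p \<in> prime_factors c. Legendre (- D) (int p) = 1"
  shows "\<exists>a b :: nat. int a ^ 2 + D * int b ^ 2 = int c ^ 2 \<and> gcd (gcd a b) c = 1"
proof -
  have c: "c > 0" using \<open>odd c\<close> by (simp add: odd_pos)
  have odd: "odd p" if "p \<in> prime_factors c" for p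
    using that \<open>odd c\<close> by (auto simp: in_prime_factors_iff intro: dvd_trans)
  have "QuadRes (int (c^2)) (- D)"
    using QuadRes_if_Legendre_prime_factors[of "c^2" "- D"] c leg odd
    by (simp add: prime_factors_power)
  then obtain x k where k: "x^2 + D = int c ^ 2 * k"
    by (auto simp: QuadRes_def cong_iff_dvd_diff elim: dvdE)
  have "coprime (2 * x) (int c)"
  proof (rule coprime_if_prime_factors_not_dvd[OF c])
    fix p assume p: "p \<in> prime_factors c"
    then have pD: "\<not> int p dvd D" and pc: "int p dvd int c"
      using leg by (auto simp: Legendre_eq_1_iff in_prime_factors_iff)
    have "coprime (int p) 2" using odd[OF p] by simp
    show "\<not> int p dvd 2 * x"
    proof
      assume "int p dvd 2 * x"
      with \<open>coprime (int p) 2\<close> have "int p dvd x" using coprime_dvd_mult_right_iff by blast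
      then have "int p dvd int c ^ 2 * k - x^2"
        using pc by (intro dvd_diff) (simp_all add: dvd_mult dvd_mult2 power2_eq_square)
      moreover have "int c ^ 2 * k - x^2 = D" using k by linarith
      ultimately show False using pD by simp
    qed
  qed
  then have "bqf_equiv (1, 0, D) (int c ^ 2, 2 * x, k)"
    using square_root_form_composite[OF assms(1) _ k] c
      bqf_equiv_norm_form_if_square[OF assms(1) iso] by simp
  then obtain u v where uv: "int c ^ 2 = u^2 + D * v^2" and "coprime u v"
    by (rule coprime_rep_if_bqf_equiv_norm_form)
  then have "gcd (nat \<bar>u\<bar>) (nat \<bar>v\<bar>) = 1"
    by (metis coprime_iff_gcd_eq_1 gcd_int_def of_nat_eq_1_iff)
  then show ?thesis
    using uv by (intro exI[of _ "nat \<bar>u\<bar>"] exI[of _ "nat \<bar>v\<bar>"]) simp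
qed

theorem lemma3p3:
  fixes D :: int and c :: nat
  assumes "D > 0" and "squarefree D"
    and "(- D) mod 4 = 2 \<or> (- D) mod 4 = 3"
    and "\<exists>n. form_class_group (-4 * D) \<cong> elem_abelian_2 n"
    and "odd c" and "c > 0"
  shows "(\<exists>a b :: nat. int a ^ 2 + D * int b ^ 2 = int c ^ 2 \<and> gcd (gcd a b) c = 1)
     \<longleftrightarrow> (\<forall>p \<in> prime_factors c. Legendre (- D) (int p) = 1)"
proof
  assume "\<exists>a b :: nat. int a ^ 2 + D * int b ^ 2 = int c ^ 2 \<and> gcd (gcd a b) c = 1"
  then show "\<forall>p \<in> prime_factors c. Legendre (- D) (int p) = 1"
    using Legendre_eq_1_if_primitive_solution[OF assms(2)] by auto
next
  assume "\<forall>p \<in> prime_factors c. Legendre (- D) (int p) = 1"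
  then show "\<exists>a b :: nat. int a ^ 2 + D * int b ^ 2 = int c ^ 2 \<and> gcd (gcd a b) c = 1"
    by (rule primitive_solution_if_Legendre[OF assms(1,4,5)])
qed

end
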